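(* Let $f,w\colon\mathbb{R}^d\to[0,\infty)$ be two proper log-concave functions such that the support of $w$ is bounded. Then there exists a solution $\tilde g$ to the problem of maximizing $\int_{\mathbb{R}^d} g$ over all positions $g$ of $w$ subject to $g\le f$, and $\tilde g$ satisfies \[ \|\tilde g\|_\infty \le \|f\|_\infty \le e^d\,\|\tilde g\|_\infty. \]
   Context: A function $\mathbb{R}^d\to[0,\infty)$ is proper log-concave if it is upper semi-continuous, log-concave, and has finite positive integral. The support of $w$ is $\{x: w(x)>0\}$. The positions of $w$ are the functions $x\mapsto\alpha\, w(Ax+a)$ with $A$ a non-singular real $d\times d$ matrix, $\alpha>0$, $a\in\mathbb{R}^d$. $g\le f$ means pointwise inequality. $\|\cdot\|_\infty$ is the supremum norm. *)

theory Defs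
  imports "HOL-Analysis.Analysis"
begin

text \<open>Functions on R^d are modelled as functions on real^'n, with d = CARD('n).\<close>

definition upper_semicont :: "(real^'n \<Rightarrow> real) \<Rightarrow> bool" where
  "upper_semicont f \<longleftrightarrow> (\<forall>c. closed {x. c \<le> f x})"

definition log_concave :: "(real^'n \<Rightarrow> real) \<Rightarrow> bool" where
  "log_concave f \<longleftrightarrow> (\<forall>x. 0 \<le> f x) \<and>
     (\<forall>x y. \<forall>t::real. 0 < t \<and> t < 1 \<longrightarrow>
        f x powr (1 - t) * f y powr t \<le> f ((1 - t) *\<^sub>R x + t *\<^sub>R y))"

definition proper_log_concave :: "(real^'n \<Rightarrow> real) \<Rightarrow> bool" where
  "proper_log_concave f \<longleftrightarrow> upper_semicont f \<and> log_concave f \<and>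
     f integrable_on UNIV \<and> integral UNIV f > 0"

definition support_of :: "(real^'n \<Rightarrow> real) \<Rightarrow> (real^'n) set" where
  "support_of w = {x. w x > 0}"

definition positions :: "(real^'n \<Rightarrow> real) \<Rightarrow> (real^'n \<Rightarrow> real) set" where
  "positions w = {(\<lambda>x. \<alpha> * w (A *v x + a)) | A \<alpha> a.
      invertible (A :: real^'n^'n) \<and> \<alpha> > 0}"

definition sup_norm :: "(real^'n \<Rightarrow> real) \<Rightarrow> real" where
  "sup_norm f = (SUP x. \<bar>f x\<bar>)"

end

theory Submission
  imports Defs "HOL-Library.Countable"
begin

typedef 'n ranked = "UNIV :: 'n set" by simp

instance ranked :: (finite) finite
proof
  have "(UNIV :: 'a ranked set) = range Abs_ranked"
    by (metis Abs_ranked_cases UNIV_eq_I rangeI)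
  then show "finite (UNIV :: 'a ranked set)"
    by (metis finite finite_imageI)
qed

instantiation ranked :: (finite) linorder
begin
definition less_eq_ranked :: "'a ranked \<Rightarrow> 'a ranked \<Rightarrow> bool" where
  "less_eq_ranked x y \<longleftrightarrow> to_nat (Rep_ranked x) \<le> to_nat (Rep_ranked y)"
definition less_ranked :: "'a ranked \<Rightarrow> 'a ranked \<Rightarrow> bool" where
  "less_ranked x y \<longleftrightarrow> to_nat (Rep_ranked x) < to_nat (Rep_ranked y)"
instance
  by standard (auto simp: less_eq_ranked_def less_ranked_def Rep_ranked_inject[symmetric])
end

instance ranked :: (finite) wellorder
proof
  fix P :: "'a ranked \<Rightarrow> bool" and a
  assume step: "\<And>x. (\<And>y. y < x \<Longrightarrow> P y) \<Longrightarrow> P x"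
  show "P a"
  proof (induction "to_nat (Rep_ranked a)" arbitrary: a rule: less_induct)
    case less
    then show ?case using step by (auto simp: less_ranked_def)
  qed
qed

lemma bij_Rep_ranked: "bij Rep_ranked"
  by (metis Rep_ranked_inverse Abs_ranked_inverse UNIV_I bij_betw_byWitness subset_UNIV)

lemma bij_Abs_ranked: "bij Abs_ranked"
  by (metis Rep_ranked_inverse Abs_ranked_inverse UNIV_I bij_betw_byWitness subset_UNIV)

lemma det_reindex:
  fixes A :: "'a::comm_ring_1^'n::finite^'n" and r :: "'m::finite \<Rightarrow> 'n"
  assumes r: "bij r"
  shows "det (\<chi> i j. A $ r i $ r j) = det A"
proof -
  have inj_r: "inj r" and r_inv: "bij (inv r)" using r by (auto simp: bij_is_inj bij_imp_bij_inv)
  let ?map = "map_permutation UNIV r"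
  have term_eq: "of_int (sign (?map p)) * (\<Prod>j\<in>UNIV. A $ j $ ?map p j)
      = of_int (sign p) * (\<Prod>i\<in>UNIV. A $ r i $ r (p i))" if p: "p permutes UNIV" for p
  proof -
    have "(\<Prod>j\<in>UNIV. A $ j $ ?map p j) = (\<Prod>i\<in>UNIV. A $ r i $ ?map p (r i))"
      using prod.reindex_bij_betw[OF r, of "\<lambda>j. A $ j $ ?map p j"] by simp
    then show ?thesis
      using inj_r p by (simp add: sign_map_permutation map_permutation_apply)
  qed
  have "det (\<chi> i j. A $ r i $ r j) =
      (\<Sum>p | p permutes UNIV. of_int (sign p) * (\<Prod>i\<in>UNIV. A $ r i $ r (p i)))"
    by (simp add: det_def)
  also have "\<dots> = (\<Sum>q | q permutes UNIV. of_int (sign q) * (\<Prod>j\<in>UNIV. A $ j $ q j))"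
  proof (rule sum.reindex_bij_witness[where j = ?map and i = "map_permutation UNIV (inv r)"])
    show "map_permutation UNIV (inv r) (?map p) = p" if "p \<in> {p. p permutes UNIV}" for p
      using that r by (intro map_permutation_compose_inv) (auto simp: inj_r)
    show "?map (map_permutation UNIV (inv r) q) = q" if "q \<in> {q. q permutes UNIV}" for q
      using that r_inv r by (intro map_permutation_compose_inv) (auto simp: bij_is_surj surj_f_inv_f)
  qed (use r r_inv term_eq in \<open>auto intro: map_permutation_permutes\<close>)
  also have "\<dots> = det A"
    by (simp add: det_def)
  finally show ?thesis .
qed

lemma emeasure_lborel_box_cart:
  fixes l u :: "real^'n"
  assumes "\<And>i. l $ i \<le> u $ i"
  shows "emeasure lborel (box l u) = ennreal (\<Prod>i\<in>UNIV. u $ i - l $ i)"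
proof -
  have basis: "\<forall>b\<in>Basis. l \<bullet> b \<le> u \<bullet> b"
    using assms by (auto simp: Basis_vec_def inner_axis)
  have "cbox l u \<noteq> {}"
    using assms by (simp add: interval_eq_empty_cart not_less)
  then have "(\<Prod>b\<in>Basis. (u - l) \<bullet> b) = (\<Prod>i\<in>UNIV. u $ i - l $ i)"
    using content_cbox[OF basis] content_cbox_cart[of l u] by (simp add: inner_diff_left)
  then show ?thesis
    using basis by simp
qed

lemma distr_lborel_vec_reindex:
  fixes r :: "'m::finite \<Rightarrow> 'n::finite"
  assumes r: "bij r"
  shows "distr lborel borel (\<lambda>x::real^'n. (\<chi> i. x $ r i) :: real^'m) = lborel"
proof (rule lborel_eqI[symmetric])
  fix l u :: "real^'m"
  assume basis: "\<And>b. b \<in> Basis \<Longrightarrow> l \<bullet> b \<le> u \<bullet> b"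
  have lu: "l $ i \<le> u $ i" for i
    using basis[of "axis i 1"] by (auto simp: inner_axis Basis_vec_def)
  let ?l = "\<chi> k. l $ inv r k" and ?u = "\<chi> k. u $ inv r k"
  have "(\<lambda>x::real^'n. (\<chi> i. x $ r i) :: real^'m) -` box l u = box ?l ?u"
    using r by (auto simp: mem_box_cart bij_inv_eq_iff) (metis bij_inv_eq_iff)+
  moreover have "(\<lambda>x::real^'n. (\<chi> i. x $ r i) :: real^'m) \<in> borel_measurable borel"
    by (intro borel_measurable_continuous_onI continuous_on_vec_lambda continuous_intros)
  ultimately have "emeasure (distr lborel borel (\<lambda>x::real^'n. (\<chi> i. x $ r i) :: real^'m)) (box l u)
      = ennreal (\<Prod>k\<in>UNIV. u $ inv r k - l $ inv r k)"
    using lu by (simp add: emeasure_distr emeasure_lborel_box_cart)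
  also have "\<dots> = ennreal (\<Prod>i\<in>UNIV. u $ i - l $ i)"
    using prod.reindex_bij_betw[OF bij_imp_bij_inv[OF r], of "\<lambda>i. u $ i - l $ i"] by simp
  also have "\<dots> = (\<Prod>b\<in>Basis. (u - l) \<bullet> b)"
    using lu emeasure_lborel_box_cart[of l u] basis by simp
  finally show "emeasure (distr lborel borel (\<lambda>x::real^'n. (\<chi> i. x $ r i) :: real^'m)) (box l u)
      = (\<Prod>b\<in>Basis. (u - l) \<bullet> b)" .
qed simp

lemma has_integral_comp_measure_preserving:
  fixes T :: "'a::euclidean_space \<Rightarrow> 'b::euclidean_space" and h :: "'b \<Rightarrow> real"
  assumes T: "T \<in> borel_measurable borel" "distr lborel borel T = lborel"
    and h: "h \<in> borel_measurable borel" "\<And>y. 0 \<le> h y"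
    and I: "(h has_integral I) UNIV"
  shows "((\<lambda>x. h (T x)) has_integral I) UNIV"
proof -
  have "0 \<le> I"
    using has_integral_nonneg[OF I] h(2) by auto
  have "integral\<^sup>N lborel h = I"
    by (rule nn_integral_has_integral_lborel[OF h I])
  then have "(\<integral>\<^sup>+x. ennreal (h (T x)) \<partial>lborel) = ennreal I"
    using nn_integral_distr[of T lborel borel "\<lambda>y. ennreal (h y)"] T h by simp
  then show ?thesis
    using T h \<open>0 \<le> I\<close> by (intro nn_integral_has_integral) auto
qed

lemma has_integral_affine_comp_wellorder:
  fixes h :: "real^'n::{finite,wellorder} \<Rightarrow> real" and A :: "real^'n::_^'n::_"
  assumes A: "invertible A" and h: "\<And>y. 0 \<le> h y" and I: "(h has_integral I) UNIV"
  shows "((\<lambda>x. h (A *v x + a)) has_integral I / \<bar>det A\<bar>) UNIV"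
proof -
  obtain A' where A': "A ** A' = mat 1" "A' ** A = mat 1"
    using A by (auto simp: invertible_def)
  have "((\<lambda>x. \<bar>det (matrix ((*v) A))\<bar> * h (A *v x + a)) has_integral I) UNIV"
  proof (rule cov_invertible_nonneg_eq[where g' = "\<lambda>_. (*v) A" and h = "\<lambda>y. A' *v (y - a)"
        and h' = "\<lambda>_. (*v) A'", THEN iffD2])
    show "((\<lambda>x. A *v x + a) has_derivative (*v) A) (at x within UNIV)" for x
      by (auto intro!: derivative_eq_intros bounded_linear_imp_has_derivative)
    show "((\<lambda>y. A' *v (y - a)) has_derivative (*v) A') (at y within UNIV)" for y
      by (auto intro!: derivative_eq_intros bounded_linear_imp_has_derivative
          simp: matrix_vector_mult_diff_distrib)
  qed (use A' h I in \<open>auto simp: matrix_vector_mul_assoc fun_eq_iff\<close>)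
  from has_integral_divide[OF this, of "\<bar>det A\<bar>"] show ?thesis
    using A by (simp add: invertible_det_nz)
qed

lemma has_integral_affine_comp:
  fixes h :: "real^'n \<Rightarrow> real" and A :: "real^'n^'n"
  assumes A: "invertible A" and hm: "h \<in> borel_measurable borel" and h: "\<And>y. 0 \<le> h y"
    and I: "(h has_integral I) UNIV"
  shows "((\<lambda>x. h (A *v x + a)) has_integral I / \<bar>det A\<bar>) UNIV"
proof -
  define to_ranked :: "real^'n \<Rightarrow> real^'n ranked" where "to_ranked x = (\<chi> i. x $ Rep_ranked i)" for x
  define of_ranked :: "real^'n ranked \<Rightarrow> real^'n" where "of_ranked y = (\<chi> k. y $ Abs_ranked k)" for y
  define A' where "A' = (\<chi> i j. A $ Rep_ranked i $ Rep_ranked j)"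
  have to_meas: "to_ranked \<in> borel_measurable borel" and of_meas: "of_ranked \<in> borel_measurable borel"
    unfolding to_ranked_def of_ranked_def
    by (intro borel_measurable_continuous_onI continuous_on_vec_lambda continuous_intros)+
  have "A' *v to_ranked x = to_ranked (A *v x)" for x
    using sum.reindex_bij_betw[OF bij_Rep_ranked, of "\<lambda>k. A $ _ $ k * x $ k"]
    by (simp add: A'_def to_ranked_def matrix_vector_mult_def vec_eq_iff)
  then have "A' *v to_ranked x + to_ranked a = to_ranked (A *v x + a)" for x
    by (simp add: to_ranked_def vec_eq_iff)
  then have comp: "of_ranked (A' *v to_ranked x + to_ranked a) = A *v x + a" for x
    by (simp add: to_ranked_def of_ranked_def Abs_ranked_inverse vec_eq_iff)
  have det: "det A' = det A"
    unfolding A'_def by (rule det_reindex[OF bij_Rep_ranked])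
  then have "invertible A'"
    using A by (simp add: invertible_det_nz)
  have of_distr: "distr lborel borel of_ranked = lborel"
    unfolding of_ranked_def by (rule distr_lborel_vec_reindex[OF bij_Abs_ranked])
  have integral_ranked:
    "((\<lambda>y. h (of_ranked (A' *v y + to_ranked a))) has_integral I / \<bar>det A'\<bar>) UNIV"
    by (rule has_integral_affine_comp_wellorder[OF \<open>invertible A'\<close> _
          has_integral_comp_measure_preserving[OF of_meas of_distr hm h I]]) (rule h)
  have "(\<lambda>y. h (of_ranked (A' *v y + to_ranked a))) \<in> borel_measurable borel"
    by (rule measurable_compose[OF measurable_compose[OF _ of_meas] hm])
      (intro borel_measurable_continuous_onI continuous_intros)
  moreover have "distr lborel borel to_ranked = lborel"
    unfolding to_ranked_def by (rule distr_lborel_vec_reindex[OF bij_Rep_ranked])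
  ultimately have
    "((\<lambda>x. h (of_ranked (A' *v to_ranked x + to_ranked a))) has_integral I / \<bar>det A'\<bar>) UNIV"
    using has_integral_comp_measure_preserving[OF to_meas _ _ h integral_ranked] by blast
  then show ?thesis
    by (simp add: comp det)
qed

lemma upper_semicont_tendsto_le:
  assumes h: "upper_semicont h" and x: "x \<longlonglongrightarrow> l" and g: "g \<longlonglongrightarrow> c"
    and le: "eventually (\<lambda>k. g k \<le> h (x k)) sequentially"
  shows "c \<le> h l"
proof (rule dense_le)
  fix e assume "e < c"
  with g have "eventually (\<lambda>k. e < g k) sequentially"
    by (rule order_tendstoD)
  with le have ev: "eventually (\<lambda>k. x k \<in> {y. e \<le> h y}) sequentially"
    by eventually_elim auto
  have "closed {y. e \<le> h y}"
    using h by (simp add: upper_semicont_def)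
  from this ev have "l \<in> {y. e \<le> h y}"
    by (rule Lim_in_closed_set[OF _ _ trivial_limit_sequentially x])
  then show "e \<le> h l"
    by simp
qed

lemma upper_semicont_borel_measurable: "upper_semicont h \<Longrightarrow> h \<in> borel_measurable borel"
  unfolding borel_measurable_iff_ge upper_semicont_def by auto

lemma upper_semicont_bounded_on_compact:
  assumes h: "upper_semicont h" and K: "compact K"
  obtains B where "\<And>x. x \<in> K \<Longrightarrow> h x \<le> B"
proof -
  have "open (- {x. real n \<le> h x})" for n
    using h by (simp add: upper_semicont_def open_Compl)
  moreover have "- {x. real n \<le> h x} = {x. h x < real n}" for n
    by auto
  moreover have "K \<subseteq> (\<Union>n. {x. h x < real n})"
    by (meson UN_I UNIV_I mem_Collect_eq reals_Archimedean2 subsetI)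
  ultimately obtain N where N: "finite N" "K \<subseteq> (\<Union>n\<in>N. {x. h x < real n})"
    using compactE_image[OF K, of UNIV "\<lambda>n. {x. h x < real n}"] by metis
  have "h x \<le> real (Max (insert 0 N))" if x: "x \<in> K" for x
  proof -
    obtain n where "n \<in> N" "h x < real n"
      using x N(2) by blast
    moreover have "n \<le> Max (insert 0 N)"
      using N(1) \<open>n \<in> N\<close> by simp
    ultimately show ?thesis
      by (meson less_imp_le of_nat_le_iff order.trans)
  qed
  then show ?thesis
    using that by blast
qed

lemma log_concave_nonneg: "log_concave h \<Longrightarrow> 0 \<le> h x"
  by (simp add: log_concave_def)

lemma log_concave_superlevel_convex:
  assumes h: "log_concave h" and s: "0 < s"
  shows "convex {x. s \<le> h x}"
  unfolding convex_alt
proof (intro ballI allI impI)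
  fix x y and t :: real
  assume x: "x \<in> {x. s \<le> h x}" and y: "y \<in> {x. s \<le> h x}" and t: "0 \<le> t \<and> t \<le> 1"
  consider "t = 0" | "t = 1" | "0 < t" "t < 1"
    using t by linarith
  then show "(1 - t) *\<^sub>R x + t *\<^sub>R y \<in> {x. s \<le> h x}"
  proof cases
    case 3
    have "s = s powr (1 - t) * s powr t"
      using s by (simp add: powr_add[symmetric])
    also have "\<dots> \<le> h x powr (1 - t) * h y powr t"
      using x y s 3 by (intro mult_mono powr_mono2) auto
    also have "\<dots> \<le> h ((1 - t) *\<^sub>R x + t *\<^sub>R y)"
      using h 3 unfolding log_concave_def by blast
    finally show ?thesis by simp
  qed (use x y in simp_all)
qed

lemma log_concave_superlevel_ball:
  fixes h :: "real^'n \<Rightarrow> real"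
  assumes h: "log_concave h" and pos: "0 < integral UNIV h"
  obtains z r c where "0 < r" "0 < c" "ball z r \<subseteq> {x. c \<le> h x}"
proof -
  have "\<exists>c>0. \<not> negligible {x. c \<le> h x}"
  proof (rule ccontr)
    assume "\<not> (\<exists>c>0. \<not> negligible {x. c \<le> h x})"
    then have "negligible {x. inverse (real (Suc n)) \<le> h x}" for n
      by simp
    then have neg: "negligible (\<Union>n. {x. inverse (real (Suc n)) \<le> h x})"
      by (rule negligible_Union_nat)
    have zero: "h x = 0" if "x \<notin> (\<Union>n. {x. inverse (real (Suc n)) \<le> h x})" for x
    proof (rule ccontr)
      have below: "h x < inverse (real (Suc n))" for n
        using that by (simp add: not_le)
      assume "h x \<noteq> 0"
      then have "0 < h x"
        using log_concave_nonneg[OF h, of x] by linarith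
      from reals_Archimedean[OF this] obtain n where "inverse (real (Suc n)) < h x" ..
      with below[of n] show False
        by linarith
    qed
    have "integral UNIV h = 0"
      using integral_spike[OF neg, of UNIV "\<lambda>_. 0" h] zero by (metis DiffD2 integral_0)
    with pos show False
      by simp
  qed
  then obtain c where c: "0 < c" "\<not> negligible {x. c \<le> h x}"
    by blast
  then have "interior {x. c \<le> h x} \<noteq> {}"
    using negligible_convex_interior[OF log_concave_superlevel_convex[OF h c(1)]] by simp
  then obtain z r where "0 < r" "ball z r \<subseteq> {x. c \<le> h x}"
    by (auto simp: mem_interior)
  then show ?thesis
    using c(1) that by blast
qed

lemma convex_contains_shrunk_ball:
  fixes C :: "'a::real_normed_vector set"
  assumes C: "convex C" "ball x0 r \<subseteq> C" "p \<in> C" and t: "0 \<le> t" "t < 1"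
  shows "ball ((1 - t) *\<^sub>R x0 + t *\<^sub>R p) ((1 - t) * r) \<subseteq> C"
proof
  fix y
  define c where "c = (1 - t) *\<^sub>R x0 + t *\<^sub>R p"
  assume "y \<in> ball ((1 - t) *\<^sub>R x0 + t *\<^sub>R p) ((1 - t) * r)"
  then have y: "norm (y - c) < (1 - t) * r"
    by (simp add: c_def dist_norm norm_minus_commute)
  define q where "q = x0 + (1 / (1 - t)) *\<^sub>R (y - c)"
  have "dist x0 q = norm (y - c) / (1 - t)"
    using t by (simp add: q_def dist_norm)
  moreover have "norm (y - c) / (1 - t) < r"
    using y t by (simp add: pos_divide_less_eq mult.commute)
  ultimately have "q \<in> ball x0 r"
    by simp
  moreover have "(1 - t) *\<^sub>R q = (1 - t) *\<^sub>R x0 + (y - c)"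
    using t by (simp add: q_def scaleR_add_right)
  then have "y = (1 - t) *\<^sub>R q + t *\<^sub>R p"
    by (simp add: c_def algebra_simps)
  ultimately show "y \<in> C"
    using C t convexD_alt[of C q p t] by auto
qed

lemma measure_le_integral_superlevel:
  fixes h :: "'a::euclidean_space \<Rightarrow> real"
  assumes K: "(h has_integral K) UNIV" and h: "\<And>x. 0 \<le> h x"
    and U: "U \<in> lmeasurable" "U \<subseteq> {x. s \<le> h x}"
  shows "s * measure lebesgue U \<le> K"
proof -
  have "(indicator U has_integral measure lebesgue U) UNIV"
    using U(1) lmeasurable_iff_indicator_has_integral by blast
  then have "((\<lambda>x. s * indicator U x) has_integral s * measure lebesgue U) UNIV"
    by (rule has_integral_mult_right)
  then show ?thesis
    by (rule has_integral_le[OF _ K]) (use U(2) h in \<open>auto simp: indicator_def\<close>)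
qed

lemma measure_disjoint_balls:
  fixes c :: "nat \<Rightarrow> 'a::euclidean_space"
  assumes "disjoint_family_on (\<lambda>j. ball (c j) r) {..N}"
  shows "measure lebesgue (\<Union>j\<le>N. ball (c j) r) = real (Suc N) * measure lebesgue (ball (0::'a) r)"
proof -
  have ball_eq: "measure lebesgue (ball (c j) r) = measure lebesgue (ball (0::'a) r)" for j
    using measure_translation[of "c j" "ball 0 r"] by (metis add.right_neutral ball_translation)
  have "measure lebesgue (\<Union>j\<le>N. ball (c j) r) = (\<Sum>j\<le>N. measure lebesgue (ball (c j) r))"
    using assms fmeasurableD2[OF lmeasurable_ball] by (intro measure_finite_Union) auto
  also have "\<dots> = real (Suc N) * measure lebesgue (ball (0::'a) r)"
    by (simp add: ball_eq)
  finally show ?thesis .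
qed

lemma dist_affine_combinations:
  fixes x y :: "'a::real_normed_vector"
  shows "dist ((1 - s) *\<^sub>R x + s *\<^sub>R y) ((1 - t) *\<^sub>R x + t *\<^sub>R y) = \<bar>s - t\<bar> * dist x y"
proof -
  have "((1 - s) *\<^sub>R x + s *\<^sub>R y) - ((1 - t) *\<^sub>R x + t *\<^sub>R y) = (s - t) *\<^sub>R (y - x)"
    by (simp add: algebra_simps)
  then show ?thesis
    by (simp add: dist_norm norm_minus_commute)
qed

lemma disjoint_balls_along_segment:
  fixes x0 p :: "'a::real_normed_vector"
  assumes r: "0 < r" and N: "4 * r * real N \<le> dist x0 p"
  defines "t \<equiv> \<lambda>j. 2 * r * real j / dist x0 p"
  shows "disjoint_family_on (\<lambda>j. ball ((1 - t j) *\<^sub>R x0 + t j *\<^sub>R p) (r / 2)) {..N}"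
  unfolding disjoint_family_on_def
proof (intro ballI impI)
  fix i j
  assume ij: "i \<in> {..N}" "j \<in> {..N}" "i \<noteq> j"
  then have "4 * r \<le> 4 * r * real N"
    using r by simp
  then have "0 < dist x0 p"
    using N r by linarith
  have "dist ((1 - t i) *\<^sub>R x0 + t i *\<^sub>R p) ((1 - t j) *\<^sub>R x0 + t j *\<^sub>R p) = \<bar>t i - t j\<bar> * dist x0 p"
    by (rule dist_affine_combinations)
  also have "t i - t j = (2 * r / dist x0 p) * (real i - real j)"
    by (simp add: t_def diff_divide_distrib right_diff_distrib)
  also have "\<bar>2 * r / dist x0 p * (real i - real j)\<bar> * dist x0 p = 2 * r * \<bar>real i - real j\<bar>"
    using \<open>0 < dist x0 p\<close> r by (simp add: abs_mult)
  also have "\<dots> \<ge> 2 * r"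
    using ij r by (cases "i < j") auto
  finally show "ball ((1 - t i) *\<^sub>R x0 + t i *\<^sub>R p) (r / 2) \<inter> ball ((1 - t j) *\<^sub>R x0 + t j *\<^sub>R p) (r / 2) = {}"
    using r by (intro disjoint_ballI) simp
qed

lemma convex_contains_disjoint_balls:
  fixes C :: "'a::euclidean_space set"
  assumes C: "convex C" "ball x0 r \<subseteq> C" "p \<in> C" and r: "0 < r"
    and N: "4 * r * real N \<le> dist x0 p"
  obtains U where "U \<in> lmeasurable" "U \<subseteq> C"
    "measure lebesgue U = real (Suc N) * measure lebesgue (ball (0::'a) (r / 2))"
proof -
  define t where "t j = 2 * r * real j / dist x0 p" for j
  define U where "U = (\<Union>j\<le>N. ball ((1 - t j) *\<^sub>R x0 + t j *\<^sub>R p) (r / 2))"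
  have "ball ((1 - t j) *\<^sub>R x0 + t j *\<^sub>R p) (r / 2) \<subseteq> C" if "j \<le> N" for j
  proof -
    have "4 * r * real j \<le> 4 * r * real N"
      using that r by (intro mult_left_mono) auto
    then have "2 * r * real j \<le> dist x0 p / 2"
      using N by linarith
    then have t: "0 \<le> t j" "t j \<le> 1 / 2"
      using r by (auto simp: t_def divide_le_eq)
    then have "ball ((1 - t j) *\<^sub>R x0 + t j *\<^sub>R p) (r / 2)
        \<subseteq> ball ((1 - t j) *\<^sub>R x0 + t j *\<^sub>R p) ((1 - t j) * r)"
      using r by (intro subset_ball) (simp add: field_simps)
    also have "\<dots> \<subseteq> C"
      using C t by (intro convex_contains_shrunk_ball) auto
    finally show ?thesis .
  qed
  then have "U \<subseteq> C"
    by (auto simp: U_def)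
  moreover have "measure lebesgue U = real (Suc N) * measure lebesgue (ball (0::'a) (r / 2))"
    unfolding U_def t_def by (intro measure_disjoint_balls disjoint_balls_along_segment r N)
  moreover have "U \<in> lmeasurable"
    unfolding U_def by (intro fmeasurable.finite_UN) auto
  ultimately show ?thesis
    using that by blast
qed

lemma convex_superlevel_radius_bound:
  fixes h :: "'a::euclidean_space \<Rightarrow> real"
  assumes C: "convex C" "ball z r \<subseteq> C" "C \<subseteq> {x. s \<le> h x}" and r: "0 < r" and s: "0 < s"
    and h: "(h has_integral K) UNIV" "\<And>x. 0 \<le> h x"
  defines "V \<equiv> measure lebesgue (ball (0::'a) (r / 2))"
  shows "C \<subseteq> ball z (4 * r * (K / (s * V) + 1))"
proof (rule subsetI, rule ccontr)
  fix p
  assume "p \<in> C" and "p \<notin> ball z (4 * r * (K / (s * V) + 1))"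
  then have far: "4 * r * (K / (s * V) + 1) \<le> dist z p"
    by simp
  have "0 < s * V"
    using r s by (simp add: V_def content_ball_pos)
  moreover have "0 \<le> K"
    using h has_integral_nonneg by blast
  ultimately have "0 \<le> K / (s * V)"
    by simp
  define N where "N = nat \<lceil>K / (s * V)\<rceil>"
  have N: "K / (s * V) \<le> real N" "real N < K / (s * V) + 1"
    unfolding N_def using \<open>0 \<le> K / (s * V)\<close> ceiling_correct[of "K / (s * V)"] by auto
  have "4 * r * real N \<le> 4 * r * (K / (s * V) + 1)"
    using N(2) r by (intro mult_left_mono) auto
  with far have "4 * r * real N \<le> dist z p"
    by linarith
  from convex_contains_disjoint_balls[OF C(1,2) \<open>p \<in> C\<close> r this]
  obtain U where "U \<in> lmeasurable" "U \<subseteq> C" "measure lebesgue U = real (Suc N) * V"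
    unfolding V_def .
  then have "s * (real (Suc N) * V) \<le> K"
    using measure_le_integral_superlevel[OF h, of U s] C(3) by auto
  moreover have "K \<le> real N * (s * V)"
    using N(1) \<open>0 < s * V\<close> by (simp add: pos_divide_le_eq)
  ultimately show False
    using \<open>0 < s * V\<close> by (simp add: algebra_simps)
qed

lemma log_concave_superlevel_bounded:
  fixes h :: "real^'n \<Rightarrow> real"
  assumes h: "log_concave h" "h integrable_on UNIV" "0 < integral UNIV h" and s: "0 < s"
  shows "bounded {x. s \<le> h x}"
proof -
  obtain z r c where r: "0 < r" and c: "0 < c" and ball: "ball z r \<subseteq> {x. c \<le> h x}"
    using log_concave_superlevel_ball[OF h(1,3)] by metis
  define C where "C = {x. min s c \<le> h x}"
  have "convex C"
    unfolding C_def using h(1) s c by (intro log_concave_superlevel_convex) auto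
  moreover have "ball z r \<subseteq> C"
    using ball by (auto simp: C_def)
  moreover have "(h has_integral integral UNIV h) UNIV"
    using h(2) by (simp add: integrable_integral)
  ultimately have "bounded C"
    using convex_superlevel_radius_bound[of C z r "min s c" h] r s c log_concave_nonneg[OF h(1)]
    by (auto simp: C_def intro: bounded_subset[OF bounded_ball])
  moreover have "{x. s \<le> h x} \<subseteq> C"
    by (auto simp: C_def)
  ultimately show ?thesis
    by (rule bounded_subset)
qed

lemma proper_log_concave_bdd_above:
  assumes h: "proper_log_concave h"
  shows "bdd_above (range h)"
proof -
  have usc: "upper_semicont h"
    using h by (simp add: proper_log_concave_def)
  have "compact {x. 1 \<le> h x}"
    using h log_concave_superlevel_bounded[of h 1] usc
    by (simp add: proper_log_concave_def upper_semicont_def compact_eq_bounded_closed)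
  then obtain B where B: "\<And>x. x \<in> {x. 1 \<le> h x} \<Longrightarrow> h x \<le> B"
    using upper_semicont_bounded_on_compact[OF usc] by metis
  have "h x \<le> max B 1" for x
    using B[of x] by force
  then show ?thesis
    by (rule bdd_aboveI2)
qed

lemma exp_gain_gt_one:
  fixes L :: real and n :: nat
  assumes n: "0 < n" and L: "real n < L"
  shows "1 < exp (L - n) * (n / L) ^ n"
proof -
  define u where "u = L / n"
  have "1 < u"
    using n L by (simp add: u_def)
  have "1 + (u - 1) + (u - 1)\<^sup>2 / 2 \<le> exp (u - 1)"
    using \<open>1 < u\<close> by (intro exp_lower_Taylor_quadratic) simp
  moreover have "0 < (u - 1)\<^sup>2 / 2"
    using \<open>1 < u\<close> by simp
  ultimately have "u < exp (u - 1)"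
    by linarith
  then have "1 < exp (u - 1) / u"
    using \<open>1 < u\<close> by (simp add: less_divide_eq)
  moreover have "exp (L - n) * (n / L) ^ n = (exp (u - 1) / u) ^ n"
    using n L by (simp add: u_def power_divide field_simps flip: exp_of_nat_mult)
  ultimately show ?thesis
    using n by (simp add: one_less_power)
qed

lemma powr_interpolation_le:
  fixes F m g t :: real
  assumes "0 < m" "0 < F" "0 \<le> t" "t \<le> 1" "0 \<le> g" "g \<le> m"
  shows "(F / m) powr (1 - t) * g \<le> F powr (1 - t) * g powr t"
proof (cases "g = 0")
  case False
  with assms have "0 < g"
    by simp
  then have "(F / m) powr (1 - t) * g = F powr (1 - t) * g powr t * (g / m) powr (1 - t)"
    using assms by (simp add: powr_divide field_simps flip: powr_add)
  moreover have "(g / m) powr (1 - t) \<le> 1 powr (1 - t)"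
    using assms by (intro powr_mono2) auto
  ultimately show ?thesis
    using assms by (simp add: mult_left_le)
qed simp

lemma proper_log_concave_ex_pos:
  assumes "proper_log_concave h"
  shows "\<exists>x. 0 < h x"
proof (rule ccontr)
  assume none: "\<not> (\<exists>x. 0 < h x)"
  have "h x = 0" for x
    using none assms log_concave_nonneg[of h x] unfolding proper_log_concave_def
    by (metis antisym not_less)
  then have "h = (\<lambda>_. 0)"
    by auto
  with assms show False
    by (simp add: proper_log_concave_def)
qed

lemma proper_log_concave_sup_norm:
  assumes "proper_log_concave h"
  shows "0 \<le> h x" and "h x \<le> sup_norm h" and "0 < sup_norm h"
proof -
  show nonneg: "0 \<le> h y" for y
    using assms by (simp add: proper_log_concave_def log_concave_nonneg)
  show le: "h y \<le> sup_norm h" for y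
    unfolding sup_norm_def using proper_log_concave_bdd_above[OF assms] nonneg
    by (simp add: cSUP_upper)
  obtain y where "0 < h y"
    using proper_log_concave_ex_pos[OF assms] by blast
  with le[of y] show "0 < sup_norm h"
    by linarith
qed

definition fits_under :: "(real^'n \<Rightarrow> real) \<Rightarrow> (real^'n \<Rightarrow> real) \<Rightarrow> real \<Rightarrow> real^'n^'n \<Rightarrow> real^'n \<Rightarrow> bool"
  where "fits_under w f \<alpha> B c \<longleftrightarrow> invertible B \<and> 0 < \<alpha> \<and> (\<forall>y. \<alpha> * w y \<le> f (B *v y + c))"

lemma det_scaleR: "det (t *\<^sub>R A) = t ^ CARD('n) * det (A :: real^'n^'n)"
proof -
  have "t *\<^sub>R A = (\<chi> i. t *s A $ i)"
    by (simp add: vec_eq_iff)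
  then show ?thesis
    using det_rows_mul[of "\<lambda>_. t" "\<lambda>i. A $ i"] by simp
qed

lemma fits_under_dilate:
  fixes f w :: "real^'n \<Rightarrow> real"
  assumes f: "log_concave f" and w: "\<And>y. 0 \<le> w y" "\<And>y. w y \<le> W"
    and fit: "fits_under w f \<alpha> B c" and m: "0 < \<alpha> * W" and z: "\<alpha> * W < f z"
    and t: "0 < t" "t < 1"
  shows "fits_under w f (\<alpha> * (f z / (\<alpha> * W)) powr (1 - t)) (t *\<^sub>R B) ((1 - t) *\<^sub>R z + t *\<^sub>R c)"
  unfolding fits_under_def
proof (intro conjI allI)
  show "invertible (t *\<^sub>R B)"
    using fit t by (simp add: fits_under_def scalar_invertible)
  have "0 < f z / (\<alpha> * W)"
    using m z by simp
  then show "0 < \<alpha> * (f z / (\<alpha> * W)) powr (1 - t)"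
    using fit by (intro mult_pos_pos) (auto simp: fits_under_def)
  fix y
  have "0 \<le> \<alpha> * w y" "\<alpha> * w y \<le> \<alpha> * W"
    using fit w by (simp_all add: fits_under_def mult_left_mono)
  then have "(f z / (\<alpha> * W)) powr (1 - t) * (\<alpha> * w y) \<le> f z powr (1 - t) * (\<alpha> * w y) powr t"
    using m z t by (intro powr_interpolation_le) auto
  also have "\<dots> \<le> f z powr (1 - t) * f (B *v y + c) powr t"
    using fit t \<open>0 \<le> \<alpha> * w y\<close> by (intro mult_left_mono powr_mono2) (auto simp: fits_under_def)
  also have "\<dots> \<le> f ((1 - t) *\<^sub>R z + t *\<^sub>R (B *v y + c))"
    using f t unfolding log_concave_def by blast
  finally show "\<alpha> * (f z / (\<alpha> * W)) powr (1 - t) * w y \<le> f ((t *\<^sub>R B) *v y + ((1 - t) *\<^sub>R z + t *\<^sub>R c))"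
    by (simp add: scaleR_matrix_vector_assoc[symmetric] algebra_simps)
qed

lemma fits_under_improve:
  fixes f w :: "real^'n \<Rightarrow> real"
  assumes f: "log_concave f" and w: "\<And>y. 0 \<le> w y" "\<And>y. w y \<le> W" "0 < W"
    and fit: "fits_under w f \<alpha> B c" and z: "exp (real CARD('n)) * (\<alpha> * W) < f z"
  shows "\<exists>B' c'. fits_under w f (f z * exp (- real CARD('n)) / W) B' c' \<and>
    \<alpha> * \<bar>det B\<bar> < f z * exp (- real CARD('n)) / W * \<bar>det B'\<bar>"
proof -
  define n where "n = CARD('n)"
  define L where "L = ln (f z / (\<alpha> * W))"
  define t where "t = n / L"
  have "0 < \<alpha>" "0 < n"
    using fit by (simp_all add: fits_under_def n_def)
  then have m: "0 < \<alpha> * W"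
    using w(3) by simp
  then have "exp n < f z / (\<alpha> * W)"
    using z by (simp add: n_def pos_less_divide_eq)
  then have "real n < L" "0 < f z / (\<alpha> * W)"
    unfolding L_def by (metis exp_gt_zero exp_less_cancel_iff exp_ln order.strict_trans)+
  then have t: "0 < t" "t < 1" and "real n = t * L"
    using \<open>0 < n\<close> by (simp_all add: t_def)
  have "(f z / (\<alpha> * W)) powr (1 - t) = exp ((1 - t) * L)"
    unfolding L_def using \<open>0 < f z / (\<alpha> * W)\<close> m by (auto simp: powr_def)
  also have "(1 - t) * L = L - n"
    using \<open>real n = t * L\<close> by (simp add: algebra_simps)
  finally have gain: "(f z / (\<alpha> * W)) powr (1 - t) = exp (L - n)" .
  have \<alpha>': "\<alpha> * exp (L - n) = f z * exp (- real n) / W"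
    using \<open>0 < f z / (\<alpha> * W)\<close> \<open>0 < \<alpha>\<close> by (simp add: L_def exp_diff exp_minus field_simps)
  have "\<alpha> * W \<le> exp n * (\<alpha> * W)"
    using mult_right_mono[of 1 "exp n" "\<alpha> * W"] m by simp
  then have "\<alpha> * W < f z"
    using z by (simp add: n_def)
  from fits_under_dilate[OF f w(1,2) fit m this t]
  have "fits_under w f (f z * exp (- real n) / W) (t *\<^sub>R B) ((1 - t) *\<^sub>R z + t *\<^sub>R c)"
    by (simp only: gain \<alpha>')
  moreover have "\<alpha> * \<bar>det B\<bar> < f z * exp (- real n) / W * \<bar>det (t *\<^sub>R B)\<bar>"
  proof -
    have "0 < \<alpha> * \<bar>det B\<bar>"
      using fit by (simp add: fits_under_def invertible_det_nz)
    then have "1 * (\<alpha> * \<bar>det B\<bar>) < (exp (L - n) * (n / L) ^ n) * (\<alpha> * \<bar>det B\<bar>)"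
      using exp_gain_gt_one[OF \<open>0 < n\<close> \<open>real n < L\<close>] by (intro mult_strict_right_mono)
    moreover have "\<bar>det (t *\<^sub>R B)\<bar> = t ^ n * \<bar>det B\<bar>"
      using t by (simp add: det_scaleR abs_mult n_def)
    ultimately show ?thesis
      unfolding \<alpha>'[symmetric] by (simp add: t_def ac_simps)
  qed
  ultimately show ?thesis
    unfolding n_def by metis
qed

lemma fits_under_exists:
  fixes f w :: "real^'n \<Rightarrow> real"
  assumes f: "proper_log_concave f" and w: "proper_log_concave w" and bw: "bounded (support_of w)"
  shows "\<exists>\<alpha> B c. fits_under w f \<alpha> B c"
proof -
  obtain z r a where r: "0 < r" and a: "0 < a" and ball: "ball z r \<subseteq> {x. a \<le> f x}"
    using log_concave_superlevel_ball f unfolding proper_log_concave_def by metis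
  obtain R where R: "0 < R" "support_of w \<subseteq> ball 0 R"
    using bounded_subset_ballD[OF bw] by blast
  define W where "W = sup_norm w"
  have W: "0 < W" "\<And>y. w y \<le> W"
    unfolding W_def using proper_log_concave_sup_norm[OF w] by simp_all
  define B :: "real^'n^'n" where "B = (r / R) *\<^sub>R mat 1"
  have "a / W * w y \<le> f (B *v y + z)" for y
  proof (cases "0 < w y")
    case True
    then have "norm y < R"
      using R by (auto simp: support_of_def)
    then have "B *v y + z \<in> ball z r"
      using r R by (simp add: B_def dist_norm scaleR_matrix_vector_assoc[symmetric] field_simps)
    then have "a \<le> f (B *v y + z)"
      using ball by auto
    moreover have "a / W * w y \<le> a"
      using W a by (simp add: divide_le_eq mult.commute mult_left_le)
    ultimately show ?thesis
      by linarith
  next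
    case False
    moreover have "0 \<le> w y" "0 \<le> f (B *v y + z)"
      using f w by (simp_all add: proper_log_concave_def log_concave_nonneg)
    ultimately show ?thesis
      by simp
  qed
  moreover have "invertible B"
    unfolding B_def using r R by (intro scalar_invertible) (auto simp: invertible_def intro!: exI[of _ "mat 1"])
  ultimately have "fits_under w f (a / W) B z"
    using a W by (simp add: fits_under_def)
  then show ?thesis
    by blast
qed

lemma position_below_iff:
  fixes A B :: "real^'n^'n"
  assumes AB: "A ** B = mat 1" "B ** A = mat 1"
  shows "(\<forall>x. \<alpha> * w (A *v x + a) \<le> f x) \<longleftrightarrow> (\<forall>y. \<alpha> * w y \<le> f (B *v y - B *v a))"
proof -
  have AB_inv: "A *v (B *v y - B *v a) + a = y" for y
    using AB by (simp add: matrix_vector_mult_diff_distrib matrix_vector_mul_assoc)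
  have BA_inv: "B *v (A *v x + a) - B *v a = x" for x
    using AB by (simp add: matrix_vector_right_distrib matrix_vector_mul_assoc)
  show ?thesis
  proof (intro iffI allI)
    fix y
    assume "\<forall>x. \<alpha> * w (A *v x + a) \<le> f x"
    then show "\<alpha> * w y \<le> f (B *v y - B *v a)"
      using AB_inv[of y] by metis
  next
    fix x
    assume "\<forall>y. \<alpha> * w y \<le> f (B *v y - B *v a)"
    then show "\<alpha> * w (A *v x + a) \<le> f x"
      using BA_inv[of x] by metis
  qed
qed

lemma has_integral_position:
  fixes A B :: "real^'n^'n"
  assumes w: "proper_log_concave w" and AB: "A ** B = mat 1" "B ** A = mat 1"
  shows "((\<lambda>x. \<alpha> * w (A *v x + a)) has_integral \<alpha> * \<bar>det B\<bar> * integral UNIV w) UNIV"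
proof -
  have "invertible A"
    using AB by (auto simp: invertible_def)
  moreover have "w \<in> borel_measurable borel"
    using w by (simp add: proper_log_concave_def upper_semicont_borel_measurable)
  moreover have "(w has_integral integral UNIV w) UNIV"
    using w by (simp add: proper_log_concave_def integrable_integral)
  ultimately have "((\<lambda>x. w (A *v x + a)) has_integral integral UNIV w / \<bar>det A\<bar>) UNIV"
    using w by (intro has_integral_affine_comp) (auto simp: proper_log_concave_def log_concave_def)
  then have "((\<lambda>x. \<alpha> * w (A *v x + a)) has_integral \<alpha> * (integral UNIV w / \<bar>det A\<bar>)) UNIV"
    by (rule has_integral_mult_right)
  moreover have "\<bar>det A\<bar> * \<bar>det B\<bar> = 1"
    using AB by (metis abs_1 abs_mult det_I det_mul)
  then have "\<alpha> * (integral UNIV w / \<bar>det A\<bar>) = \<alpha> * \<bar>det B\<bar> * integral UNIV w"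
    by (simp add: divide_inverse inverse_unique ac_simps)
  ultimately show ?thesis
    by simp
qed

lemma fits_under_value_le:
  assumes w: "proper_log_concave w" and f: "f integrable_on UNIV" and fit: "fits_under w f \<alpha> B c"
  shows "\<alpha> * \<bar>det B\<bar> \<le> integral UNIV f / integral UNIV w"
proof -
  obtain A where AB: "B ** A = mat 1" "A ** B = mat 1"
    using fit by (auto simp: fits_under_def invertible_def)
  have "B *v (A *v (- c)) = - c"
    using AB by (simp add: matrix_vector_mul_assoc)
  then have below: "\<forall>x. \<alpha> * w (A *v x + A *v (- c)) \<le> f x"
    using fit position_below_iff[OF AB(2,1), of \<alpha> w "A *v (- c)" f] by (simp add: fits_under_def)
  have "\<alpha> * \<bar>det B\<bar> * integral UNIV w \<le> integral UNIV f"
    by (rule has_integral_le[OF has_integral_position[OF w AB(2,1), of \<alpha> "A *v (- c)"]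
          integrable_integral[OF f]]) (simp add: below)
  then show ?thesis
    using w by (simp add: proper_log_concave_def pos_le_divide_eq)
qed

lemma fits_under_normalize:
  fixes f w :: "real^'n \<Rightarrow> real"
  assumes f: "log_concave f" and w: "\<And>y. 0 \<le> w y" "\<And>y. w y \<le> W" "0 < W"
    and fit: "fits_under w f \<alpha> B c"
  shows "\<exists>\<alpha>' B' c'. fits_under w f \<alpha>' B' c' \<and> f z * exp (- real CARD('n)) / W \<le> \<alpha>' \<and>
    \<alpha> * \<bar>det B\<bar> \<le> \<alpha>' * \<bar>det B'\<bar>"
proof (cases "f z * exp (- real CARD('n)) / W \<le> \<alpha>")
  case True
  with fit show ?thesis
    by blast
next
  case False
  then have "exp (real CARD('n)) * (\<alpha> * W) < f z"
    using w(3) by (simp add: pos_less_divide_eq exp_minus field_simps)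
  from fits_under_improve[OF f w fit this] show ?thesis
    by (meson less_imp_le order_refl)
qed

lemma matrix_component_le_of_ball:
  fixes B :: "real^'n^'m"
  assumes r: "0 < r" and bound: "\<And>u. norm u < r \<Longrightarrow> norm (B *v u) \<le> b"
  shows "\<bar>B $ i $ j\<bar> \<le> 2 * b / r"
proof -
  have "(B *v ((r / 2) *\<^sub>R axis j 1)) $ i = (r / 2) * B $ i $ j"
    by (simp add: matrix_vector_mult_scaleR matrix_vector_mult_basis column_def)
  then have "(r / 2) * \<bar>B $ i $ j\<bar> \<le> b"
    using component_le_norm_cart[of "B *v ((r / 2) *\<^sub>R axis j 1)" i] bound[of "(r / 2) *\<^sub>R axis j 1"] r
    by (simp add: abs_mult)
  then show ?thesis
    using r by (simp add: field_simps)
qed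

lemma norm_le_matrix_component:
  fixes B :: "real^'n^'m"
  assumes "\<And>i j. \<bar>B $ i $ j\<bar> \<le> b"
  shows "norm B \<le> real CARD('m) * real CARD('n) * b"
proof -
  have "norm B \<le> (\<Sum>i\<in>UNIV. norm (B $ i))"
    by (simp add: norm_vec_def L2_set_le_sum)
  also have "\<dots> \<le> (\<Sum>i\<in>(UNIV::'m set). real CARD('n) * b)"
    using assms by (intro sum_mono order.trans[OF norm_le_l1_cart] sum_bounded_above) auto
  finally show ?thesis
    by simp
qed

lemma affine_bounded_on_ball:
  fixes B :: "real^'n^'m"
  assumes r: "0 < r" and near: "\<And>y. y \<in> ball y0 r \<Longrightarrow> norm (B *v y + c) \<le> R"
  defines "K \<equiv> real CARD('m) * real CARD('n) * (2 * (2 * R) / r)"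
  shows "norm B \<le> K" and "norm c \<le> R + K * norm y0"
proof -
  have "norm (B *v u) \<le> 2 * R" if "norm u < r" for u
  proof -
    have "B *v u = (B *v (y0 + u) + c) - (B *v y0 + c)"
      by (simp add: matrix_vector_right_distrib)
    then have "norm (B *v u) \<le> norm (B *v (y0 + u) + c) + norm (B *v y0 + c)"
      by (metis norm_triangle_ineq4)
    moreover have "y0 + u \<in> ball y0 r" and "y0 \<in> ball y0 r"
      using that r by (simp_all add: dist_norm)
    then have "norm (B *v (y0 + u) + c) \<le> R" and "norm (B *v y0 + c) \<le> R"
      by (simp_all add: near)
    ultimately show ?thesis
      by linarith
  qed
  then have entries: "\<bar>B $ i $ j\<bar> \<le> 2 * (2 * R) / r" for i j
    by (rule matrix_component_le_of_ball[OF r])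
  then show "norm B \<le> K"
    unfolding K_def by (rule norm_le_matrix_component)
  have "norm c \<le> norm (B *v y0 + c) + norm (B *v y0)"
    by (metis add_diff_cancel_left' norm_triangle_ineq4 add.commute)
  also have "norm (B *v y0) \<le> onorm ((*v) B) * norm y0"
    by (rule onorm[OF matrix_vector_mul_bounded_linear])
  also have "onorm ((*v) B) * norm y0 \<le> K * norm y0"
    unfolding K_def by (intro mult_right_mono onorm_le_matrix_component[OF entries]) simp
  finally show "norm c \<le> R + K * norm y0"
    using near[of y0] r by simp
qed

lemma fits_under_bounded:
  fixes f w :: "real^'n \<Rightarrow> real"
  assumes f: "proper_log_concave f" and w: "proper_log_concave w" and \<alpha>0: "0 < \<alpha>0"
  shows "\<exists>K. \<forall>\<alpha> B c. fits_under w f \<alpha> B c \<and> \<alpha>0 \<le> \<alpha> \<longrightarrow> norm (B, c, \<alpha>) \<le> K"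
proof -
  obtain y0 r a where r: "0 < r" and a: "0 < a" and ball: "ball y0 r \<subseteq> {y. a \<le> w y}"
    using log_concave_superlevel_ball w unfolding proper_log_concave_def by metis
  have "bounded {x. \<alpha>0 * a \<le> f x}"
    using f \<alpha>0 a by (intro log_concave_superlevel_bounded) (simp_all add: proper_log_concave_def)
  then obtain R where R: "\<And>x. \<alpha>0 * a \<le> f x \<Longrightarrow> norm x \<le> R"
    by (auto simp: bounded_iff)
  obtain M where M: "\<And>x. f x \<le> M"
    using proper_log_concave_bdd_above[OF f] by (auto simp: bdd_above_def)
  define KB where "KB = real CARD('n) * real CARD('n) * (2 * (2 * R) / r)"
  have "norm (B, c, \<alpha>) \<le> KB + (R + KB * norm y0) + M / a"
    if fit: "fits_under w f \<alpha> B c" and "\<alpha>0 \<le> \<alpha>" for \<alpha> B c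
  proof -
    have near: "norm (B *v y + c) \<le> R" if "y \<in> ball y0 r" for y
    proof (rule R)
      have "\<alpha>0 * a \<le> \<alpha> * w y"
        using that ball \<open>\<alpha>0 \<le> \<alpha>\<close> \<alpha>0 a by (intro mult_mono) auto
      also have "\<dots> \<le> f (B *v y + c)"
        using fit by (simp add: fits_under_def)
      finally show "\<alpha>0 * a \<le> f (B *v y + c)" .
    qed
    have "a \<le> w y0"
      using subsetD[OF ball, of y0] r by simp
    then have "\<alpha> * a \<le> \<alpha> * w y0"
      using fit by (intro mult_left_mono) (auto simp: fits_under_def)
    also have "\<dots> \<le> M"
      using fit M[of "B *v y0 + c"] by (auto simp: fits_under_def intro: order.trans)
    finally have "\<alpha> \<le> M / a"
      using a by (simp add: pos_le_divide_eq)
    moreover have "norm B \<le> KB" "norm c \<le> R + KB * norm y0"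
      unfolding KB_def using affine_bounded_on_ball[of r y0 B c R] r near by auto
    ultimately show ?thesis
      using \<open>\<alpha>0 \<le> \<alpha>\<close> \<alpha>0 norm_Pair_le[of B "(c, \<alpha>)"] norm_Pair_le[of c \<alpha>] by simp
  qed
  then show ?thesis
    by blast
qed

lemma tendsto_det:
  fixes B :: "'a \<Rightarrow> real^'n^'n"
  assumes "(B \<longlongrightarrow> L) F"
  shows "((\<lambda>k. det (B k)) \<longlongrightarrow> det L) F"
proof -
  have "((\<lambda>k. B k $ i $ j) \<longlongrightarrow> L $ i $ j) F" for i j
    by (intro tendsto_vec_nth assms)
  then show ?thesis
    unfolding det_def by (intro tendsto_sum tendsto_mult tendsto_const tendsto_prod)
qed

lemma tendsto_matrix_vector_mult:
  fixes B :: "'a \<Rightarrow> real^'n^'m"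
  assumes "(B \<longlongrightarrow> L) F"
  shows "((\<lambda>k. B k *v y) \<longlongrightarrow> L *v y) F"
proof -
  have "((\<lambda>k. B k $ i $ j) \<longlongrightarrow> L $ i $ j) F" for i j
    by (intro tendsto_vec_nth assms)
  then show ?thesis
    unfolding matrix_vector_mult_def by (intro vec_tendstoI) (simp add: tendsto_sum tendsto_mult_right)
qed

lemma fits_under_limit:
  assumes f: "upper_semicont f" and fits: "\<And>k. fits_under w f (\<alpha> k) (B k) (c k)"
    and lim: "\<alpha> \<longlonglongrightarrow> \<alpha>'" "B \<longlonglongrightarrow> B'" "c \<longlonglongrightarrow> c'" and "0 < \<alpha>'" "invertible B'"
  shows "fits_under w f \<alpha>' B' c'"
  unfolding fits_under_def
proof (intro conjI allI)
  fix y
  have "(\<lambda>k. B k *v y + c k) \<longlonglongrightarrow> B' *v y + c'"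
    by (intro tendsto_add tendsto_matrix_vector_mult lim)
  moreover have "(\<lambda>k. \<alpha> k * w y) \<longlonglongrightarrow> \<alpha>' * w y"
    by (intro tendsto_mult_right lim)
  moreover have "eventually (\<lambda>k. \<alpha> k * w y \<le> f (B k *v y + c k)) sequentially"
    using fits by (simp add: fits_under_def)
  ultimately show "\<alpha>' * w y \<le> f (B' *v y + c')"
    by (rule upper_semicont_tendsto_le[OF f])
qed (use assms in auto)

lemma fits_under_maximal_limit:
  assumes usc: "upper_semicont f" and fits: "\<And>k. fits_under w f (\<alpha> k) (B k) (c k)"
    and "0 < \<alpha>0" and normal: "\<And>k. \<alpha>0 \<le> \<alpha> k"
    and bounded: "bounded (range (\<lambda>k. (B k, c k, \<alpha> k)))"
    and value_lim: "(\<lambda>k. \<alpha> k * \<bar>det (B k)\<bar>) \<longlonglongrightarrow> S"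
    and below_S: "\<And>\<alpha>' B' c'. fits_under w f \<alpha>' B' c' \<Longrightarrow> \<alpha>' * \<bar>det B'\<bar> \<le> S"
  shows "\<exists>\<alpha> B c. fits_under w f \<alpha> B c \<and>
    (\<forall>\<alpha>' B' c'. fits_under w f \<alpha>' B' c' \<longrightarrow> \<alpha>' * \<bar>det B'\<bar> \<le> \<alpha> * \<bar>det B\<bar>)"
proof -
  obtain l r where r: "strict_mono r" and lim_l: "((\<lambda>k. (B k, c k, \<alpha> k)) \<circ> r) \<longlonglongrightarrow> l"
    using bounded_imp_convergent_subsequence[OF bounded] by blast
  obtain B' c' \<alpha>' where "l = (B', c', \<alpha>')"
    by (rule prod_cases3)
  with lim_l have lim: "((\<lambda>k. (B k, c k, \<alpha> k)) \<circ> r) \<longlonglongrightarrow> (B', c', \<alpha>')"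
    by simp
  have lim_B: "(\<lambda>k. B (r k)) \<longlonglongrightarrow> B'" and lim_c: "(\<lambda>k. c (r k)) \<longlonglongrightarrow> c'"
    and lim_\<alpha>: "(\<lambda>k. \<alpha> (r k)) \<longlonglongrightarrow> \<alpha>'"
    using tendsto_fst[OF lim] tendsto_fst[OF tendsto_snd[OF lim]] tendsto_snd[OF tendsto_snd[OF lim]]
    by (simp_all add: o_def)
  have "\<alpha>0 \<le> \<alpha>'"
    by (rule LIMSEQ_le_const[OF lim_\<alpha>]) (use normal in blast)
  then have "0 < \<alpha>'"
    using \<open>0 < \<alpha>0\<close> by linarith
  have "(\<lambda>k. \<alpha> (r k) * \<bar>det (B (r k))\<bar>) \<longlonglongrightarrow> S"
    using LIMSEQ_subseq_LIMSEQ[OF value_lim r] by (simp add: o_def)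
  moreover have "(\<lambda>k. \<alpha> (r k) * \<bar>det (B (r k))\<bar>) \<longlonglongrightarrow> \<alpha>' * \<bar>det B'\<bar>"
    by (intro tendsto_mult tendsto_rabs tendsto_det lim_\<alpha> lim_B)
  ultimately have S: "\<alpha>' * \<bar>det B'\<bar> = S"
    by (rule LIMSEQ_unique[rotated])
  have "0 < \<alpha> 0 * \<bar>det (B 0)\<bar>"
    using fits[of 0] by (simp add: fits_under_def invertible_det_nz)
  then have "0 < \<alpha>' * \<bar>det B'\<bar>"
    using below_S[OF fits[of 0]] S by linarith
  then have "invertible B'"
    by (auto simp: invertible_det_nz)
  have "fits_under w f (\<alpha> (r k)) (B (r k)) (c (r k))" for k
    by (rule fits)
  from fits_under_limit[OF usc this lim_\<alpha> lim_B lim_c \<open>0 < \<alpha>'\<close> \<open>invertible B'\<close>] below_S S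
  show ?thesis
    by metis
qed

lemma fits_under_maximum_exists:
  fixes f w :: "real^'n \<Rightarrow> real"
  assumes f: "proper_log_concave f" and w: "proper_log_concave w" and bw: "bounded (support_of w)"
  shows "\<exists>\<alpha> B c. fits_under w f \<alpha> B c \<and>
    (\<forall>\<alpha>' B' c'. fits_under w f \<alpha>' B' c' \<longrightarrow> \<alpha>' * \<bar>det B'\<bar> \<le> \<alpha> * \<bar>det B\<bar>)"
proof -
  define W where "W = sup_norm w"
  have W: "\<And>y. 0 \<le> w y" "\<And>y. w y \<le> W" "0 < W"
    unfolding W_def using proper_log_concave_sup_norm[OF w] by simp_all
  obtain z where "0 < f z"
    using proper_log_concave_ex_pos[OF f] by blast
  define \<alpha>0 where "\<alpha>0 = f z * exp (- real CARD('n)) / W"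
  have "0 < \<alpha>0"
    using \<open>0 < f z\<close> W(3) by (simp add: \<alpha>0_def)
  obtain K where K: "\<And>\<alpha> B c. fits_under w f \<alpha> B c \<Longrightarrow> \<alpha>0 \<le> \<alpha> \<Longrightarrow> norm (B, c, \<alpha>) \<le> K"
    using fits_under_bounded[OF f w \<open>0 < \<alpha>0\<close>] by blast
  define V where "V = {\<alpha> * \<bar>det B\<bar> | \<alpha> B c. fits_under w f \<alpha> B c}"
  have "V \<noteq> {}"
    using fits_under_exists[OF f w bw] by (auto simp: V_def)
  moreover have "bdd_above V"
    using fits_under_value_le[OF w] f unfolding V_def proper_log_concave_def
    by (intro bdd_aboveI[where M = "integral UNIV f / integral UNIV w"]) blast
  ultimately have below_S: "\<alpha> * \<bar>det B\<bar> \<le> Sup V" if "fits_under w f \<alpha> B c" for \<alpha> B c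
    using that by (intro cSup_upper) (auto simp: V_def)
  have "\<exists>\<alpha> B c. fits_under w f \<alpha> B c \<and> \<alpha>0 \<le> \<alpha> \<and> Sup V - 1 / Suc k < \<alpha> * \<bar>det B\<bar>" for k
  proof -
    obtain v where "v \<in> V" "Sup V - 1 / Suc k < v"
      using less_cSup_iff[OF \<open>V \<noteq> {}\<close> \<open>bdd_above V\<close>, of "Sup V - 1 / Suc k"] by auto
    then obtain \<alpha> B c where "fits_under w f \<alpha> B c" "Sup V - 1 / Suc k < \<alpha> * \<bar>det B\<bar>"
      by (auto simp: V_def)
    with fits_under_normalize[OF _ W this(1), of z] f show ?thesis
      unfolding \<alpha>0_def proper_log_concave_def by (meson less_le_trans)
  qed
  then obtain \<alpha> B c where fits: "\<And>k. fits_under w f (\<alpha> k) (B k) (c k)"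
    and normal: "\<And>k. \<alpha>0 \<le> \<alpha> k" and close: "\<And>k. Sup V - 1 / Suc k < \<alpha> k * \<bar>det (B k)\<bar>"
    by metis
  have value_lim: "(\<lambda>k. \<alpha> k * \<bar>det (B k)\<bar>) \<longlonglongrightarrow> Sup V"
  proof (rule tendsto_sandwich[OF _ _ _ tendsto_const])
    show "(\<lambda>k. Sup V - 1 / Suc k) \<longlonglongrightarrow> Sup V"
      using tendsto_diff[OF tendsto_const LIMSEQ_inverse_real_of_nat, of "Sup V"]
      by (simp add: inverse_eq_divide)
  qed (use close below_S[OF fits] in \<open>auto intro!: always_eventually less_imp_le\<close>)
  have bounded: "bounded (range (\<lambda>k. (B k, c k, \<alpha> k)))"
    using K[OF fits normal] by (auto simp: bounded_iff)
  show ?thesis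
    using f fits_under_maximal_limit[OF _ fits \<open>0 < \<alpha>0\<close> normal bounded value_lim below_S]
    by (simp add: proper_log_concave_def)
qed

lemma sup_norm_eq_Sup: "(\<And>x. 0 \<le> h x) \<Longrightarrow> sup_norm h = Sup (range h)"
  by (simp add: sup_norm_def)

lemma sup_norm_mono:
  assumes "\<And>x. 0 \<le> g x" "\<And>x. g x \<le> f x" "bdd_above (range f)"
  shows "sup_norm g \<le> sup_norm f"
proof -
  have "\<And>x. 0 \<le> f x"
    using assms(1,2) order.trans by blast
  then have "sup_norm g = Sup (range g)" "sup_norm f = Sup (range f)"
    using assms(1) by (simp_all add: sup_norm_eq_Sup)
  moreover have "Sup (range g) \<le> Sup (range f)"
    using assms(2,3) by (intro cSUP_mono) auto
  ultimately show ?thesis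
    by simp
qed

lemma sup_norm_position:
  fixes A :: "real^'n^'n"
  assumes w: "\<And>y. 0 \<le> w y" "bdd_above (range w)" and \<alpha>: "0 \<le> \<alpha>" and A: "invertible A"
  shows "sup_norm (\<lambda>x. \<alpha> * w (A *v x + a)) = \<alpha> * sup_norm w"
proof -
  obtain A' where "A ** A' = mat 1"
    using A by (auto simp: invertible_def)
  then have "A *v (A' *v (y - a)) + a = y" for y
    by (simp add: matrix_vector_mul_assoc)
  then have "range (\<lambda>x. \<alpha> * w (A *v x + a)) = (*) \<alpha> ` range w"
    by (auto simp: image_iff) (metis rangeI)
  moreover have "\<alpha> * Sup (range w) = Sup ((*) \<alpha> ` range w)"
    using w \<alpha> by (intro continuous_at_Sup_mono) (auto simp: mono_def mult_left_mono intro: continuous_intros)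
  ultimately show ?thesis
    using w \<alpha> by (simp add: sup_norm_eq_Sup)
qed

lemma integral_position_le_best_fit:
  assumes w: "proper_log_concave w"
    and best: "\<forall>\<alpha>' B' c'. fits_under w f \<alpha>' B' c' \<longrightarrow> \<alpha>' * \<bar>det B'\<bar> \<le> \<alpha> * \<bar>det B\<bar>"
    and g: "g \<in> positions w" "\<forall>x. g x \<le> f x"
  shows "integral UNIV g \<le> \<alpha> * \<bar>det B\<bar> * integral UNIV w"
proof -
  obtain A' \<alpha>' a' where g_eq: "g = (\<lambda>x. \<alpha>' * w (A' *v x + a'))" and "invertible A'" "0 < \<alpha>'"
    using g(1) by (auto simp: positions_def)
  then obtain B' where AB: "A' ** B' = mat 1" "B' ** A' = mat 1"
    by (auto simp: invertible_def)
  then have "fits_under w f \<alpha>' B' (- (B' *v a'))"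
    using g(2) position_below_iff[OF AB, of \<alpha>' w a' f] \<open>0 < \<alpha>'\<close>
    by (auto simp: fits_under_def g_eq invertible_def)
  then have "\<alpha>' * \<bar>det B'\<bar> * integral UNIV w \<le> \<alpha> * \<bar>det B\<bar> * integral UNIV w"
    using best w by (intro mult_right_mono) (auto simp: proper_log_concave_def)
  moreover have "integral UNIV g = \<alpha>' * \<bar>det B'\<bar> * integral UNIV w"
    unfolding g_eq by (rule integral_unique[OF has_integral_position[OF w AB]])
  ultimately show ?thesis
    by simp
qed

lemma best_fit_sup_bound:
  fixes f w :: "real^'n \<Rightarrow> real"
  assumes f: "proper_log_concave f" and w: "proper_log_concave w"
    and fit: "fits_under w f \<alpha> B c"
    and best: "\<forall>\<alpha>' B' c'. fits_under w f \<alpha>' B' c' \<longrightarrow> \<alpha>' * \<bar>det B'\<bar> \<le> \<alpha> * \<bar>det B\<bar>"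
  shows "sup_norm f \<le> exp (real CARD('n)) * (\<alpha> * sup_norm w)"
proof (rule ccontr)
  assume "\<not> ?thesis"
  moreover have "sup_norm f = Sup (range f)"
    using f by (simp add: sup_norm_eq_Sup proper_log_concave_def log_concave_nonneg)
  ultimately have "exp (real CARD('n)) * (\<alpha> * sup_norm w) < Sup (range f)"
    by simp
  then obtain z where z: "exp (real CARD('n)) * (\<alpha> * sup_norm w) < f z"
    using less_cSUP_iff[of UNIV f] proper_log_concave_bdd_above[OF f] by auto
  have "log_concave f" "\<And>y. 0 \<le> w y"
    using f w by (simp_all add: proper_log_concave_def log_concave_nonneg)
  from fits_under_improve[OF this proper_log_concave_sup_norm(2,3)[OF w] fit z]
  obtain B' c' where "fits_under w f (f z * exp (- real CARD('n)) / sup_norm w) B' c'"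
    and better: "\<alpha> * \<bar>det B\<bar> < f z * exp (- real CARD('n)) / sup_norm w * \<bar>det B'\<bar>"
    by blast
  with best show False
    by (meson not_le)
qed

lemma fits_under_position:
  fixes f w :: "real^'n \<Rightarrow> real"
  assumes f: "proper_log_concave f" and w: "proper_log_concave w" and fit: "fits_under w f \<alpha> B c"
  shows "\<exists>g \<in> positions w. (\<forall>x. g x \<le> f x) \<and> integral UNIV g = \<alpha> * \<bar>det B\<bar> * integral UNIV w \<and>
    sup_norm g = \<alpha> * sup_norm w \<and> sup_norm g \<le> sup_norm f"
proof -
  obtain A where AB: "A ** B = mat 1" "B ** A = mat 1"
    using fit by (auto simp: fits_under_def invertible_def)
  define g where "g = (\<lambda>x. \<alpha> * w (A *v x + A *v (- c)))"
  have "\<And>y. 0 \<le> w y" "bdd_above (range w)"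
    using proper_log_concave_sup_norm[OF w] proper_log_concave_bdd_above[OF w] by simp_all
  then have "sup_norm g = \<alpha> * sup_norm w"
    unfolding g_def using fit AB by (intro sup_norm_position) (auto simp: fits_under_def invertible_def)
  moreover have below: "\<forall>x. g x \<le> f x"
    using fit position_below_iff[OF AB, of \<alpha> w "A *v (- c)" f] AB
    by (simp add: g_def fits_under_def matrix_vector_mul_assoc)
  moreover have "sup_norm g \<le> sup_norm f"
    using below fit proper_log_concave_sup_norm(1)[OF w] proper_log_concave_bdd_above[OF f]
    by (intro sup_norm_mono) (auto simp: g_def fits_under_def)
  moreover have "g \<in> positions w"
    using AB fit by (auto simp: positions_def g_def fits_under_def invertible_def)
  moreover have "integral UNIV g = \<alpha> * \<bar>det B\<bar> * integral UNIV w"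
    unfolding g_def by (rule integral_unique[OF has_integral_position[OF w AB]])
  ultimately show ?thesis
    by blast
qed

theorem lemma2p5:
  fixes f w :: "real^'n \<Rightarrow> real"
  assumes "proper_log_concave f" and "proper_log_concave w"
    and "bounded (support_of w)"
  shows "\<exists>g0 \<in> positions w. (\<forall>x. g0 x \<le> f x) \<and>
           (\<forall>g \<in> positions w. (\<forall>x. g x \<le> f x) \<longrightarrow> integral UNIV g \<le> integral UNIV g0) \<and>
           sup_norm g0 \<le> sup_norm f \<and>
           sup_norm f \<le> exp (real CARD('n)) * sup_norm g0"
proof -
  obtain \<alpha> B c where fit: "fits_under w f \<alpha> B c"
    and best: "\<forall>\<alpha>' B' c'. fits_under w f \<alpha>' B' c' \<longrightarrow> \<alpha>' * \<bar>det B'\<bar> \<le> \<alpha> * \<bar>det B\<bar>"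
    using fits_under_maximum_exists[OF assms] by blast
  then show ?thesis
    using fits_under_position[OF assms(1,2) fit] integral_position_le_best_fit[OF assms(2) best]
      best_fit_sup_bound[OF assms(1,2) fit best]
    by (metis (no_types, lifting))
qed

end
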